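(* Let $n\ge2$, $\gamma\in\,]0,1]$, $p\in[1,\infty[$, and let $\Omega$ be a bounded domain in $\mathbb{R}^n$. Assume that there exists $c_0>0$ such that $|B_\gamma(x,r)\cap\Omega|\ge c_0 r^{n_\gamma}$ for all $x\in\overline\Omega$ and all $0<r\le \operatorname{diam}_{\delta_\gamma}\Omega$. Assume moreover that there are constants $\tau\ge1$, $\tilde\eta>0$ and $c_p>0$ such that the Poincaré inequality $$\frac{1}{|\Omega\cap B_\gamma(x,r)|}\int_{\Omega\cap B_\gamma(x,r)}\bigl|f-f_{\Omega\cap B_\gamma(x,r)}\bigr|\,dy\le c_p\, r^{\tilde\eta}\left(\frac{1}{|\Omega\cap B_\gamma(x,\tau r)|}\int_{\Omega\cap B_\gamma(x,\tau r)}|\nabla f|^p\,dy\right)^{1/p}$$ holds for all $f\in W^1_p(\Omega)$, all $x\in\Omega$ and all $r>0$, where $f_E=\frac{1}{|E|}\int_E f$. Let $\lambda>0$ satisfy $p\tilde\eta>n_\gamma-\lambda$. Then there exists $c>0$ such that for every $f\in W^{1,\lambda}_{p,\gamma}(\Omega)$ (identified with its continuous representative) and all $x,y\in\Omega$, $$|f(x)-f(y)|\le c\,\|f\|_{W^{1,\lambda}_{p,\gamma}(\Omega)}\bigl(|\bar x-\bar y|^\gamma+|x_n-y_n|\bigr)^{\tilde\eta+\frac{\lambda-n_\gamma}{p}} .$$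
   Context: Points of $\mathbb{R}^n$ are written $x=(\bar x,x_n)$, $\bar x\in\mathbb{R}^{n-1}$. $\delta_\gamma(x,y)=\max\{|\bar x-\bar y|^\gamma,|x_n-y_n|\}$, $B_\gamma(x,r)=\{y:\delta_\gamma(x,y)<r\}$, $\operatorname{diam}_{\delta_\gamma}\Omega$ is the diameter of $\Omega$ in the metric $\delta_\gamma$, and $n_\gamma=\frac{n-1}{\gamma}+1$. For $\lambda\ge0$ and $g\in L^p(\Omega)$, $\|g\|_{L^\lambda_{p,\gamma}(\Omega)}=\sup_{x\in\Omega}\sup_{r>0}\bigl(\frac{1}{\min\{r^\lambda,1\}}\int_{B_\gamma(x,r)\cap\Omega}|g|^p\bigr)^{1/p}$, and $L^\lambda_{p,\gamma}(\Omega)$ is the space where this is finite. For $l\in\mathbb{N}$, $W^{l,\lambda}_{p,\gamma}(\Omega)=\{f\in L^p(\Omega): D^\alpha f\in L^\lambda_{p,\gamma}(\Omega)\ \forall |\alpha|\le l\}$ with norm $\sum_{|\alpha|\le l}\|D^\alpha f\|_{L^\lambda_{p,\gamma}(\Omega)}$ (weak derivatives). *)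

theory Defs
  imports "HOL-Analysis.Analysis"
begin

text \<open>Points of R^n are modelled as pairs (xbar, x_n) :: (real^'m) \<times> real,
  so n = CARD('m) + 1 \<ge> 2.\<close>

type_synonym 'm pt = "(real ^ 'm) \<times> real"

definition delta_g :: "real \<Rightarrow> 'm::finite pt \<Rightarrow> 'm pt \<Rightarrow> real" where
  "delta_g gam x y = max (norm (fst x - fst y) powr gam) \<bar>snd x - snd y\<bar>"

definition ball_g :: "real \<Rightarrow> 'm::finite pt \<Rightarrow> real \<Rightarrow> 'm pt set" where
  "ball_g gam x r = {y. delta_g gam x y < r}"

definition diam_g :: "real \<Rightarrow> 'm::finite pt set \<Rightarrow> real" where
  "diam_g gam S = Sup {delta_g gam x y | x y. x \<in> S \<and> y \<in> S}"

definition n_gam :: "real \<Rightarrow> 'm::finite itself \<Rightarrow> real" where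
  "n_gam gam (_ :: 'm itself) = real CARD('m) / gam + 1"

coinductive smooth_fun :: "('a::euclidean_space \<Rightarrow> real) \<Rightarrow> bool" where
  "(\<forall>x. f differentiable (at x)) \<Longrightarrow>
   (\<forall>i\<in>Basis. smooth_fun (\<lambda>x. frechet_derivative f (at x) i)) \<Longrightarrow> smooth_fun f"

definition tsupport :: "('a::real_normed_vector \<Rightarrow> real) \<Rightarrow> 'a set" where
  "tsupport \<phi> = closure {x. \<phi> x \<noteq> 0}"

definition test_fun :: "'a::euclidean_space set \<Rightarrow> ('a \<Rightarrow> real) \<Rightarrow> bool" where
  "test_fun \<Omega> \<phi> \<longleftrightarrow> smooth_fun \<phi> \<and> compact (tsupport \<phi>) \<and> tsupport \<phi> \<subseteq> \<Omega>"

definition weak_partial ::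
  "'a::euclidean_space set \<Rightarrow> ('a \<Rightarrow> real) \<Rightarrow> 'a \<Rightarrow> ('a \<Rightarrow> real) \<Rightarrow> bool" where
  "weak_partial \<Omega> f i g \<longleftrightarrow>
     (\<forall>\<phi>. test_fun \<Omega> \<phi> \<longrightarrow>
        (\<integral>x. f x * frechet_derivative \<phi> (at x) i \<partial>(lebesgue_on \<Omega>))
          = - (\<integral>x. g x * \<phi> x \<partial>(lebesgue_on \<Omega>)))"

definition Lp :: "'a::euclidean_space set \<Rightarrow> real \<Rightarrow> ('a \<Rightarrow> real) \<Rightarrow> bool" where
  "Lp \<Omega> p f \<longleftrightarrow> f \<in> borel_measurable (lebesgue_on \<Omega>) \<and>
      integrable (lebesgue_on \<Omega>) (\<lambda>x. \<bar>f x\<bar> powr p)"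

definition morrey_vals ::
  "real \<Rightarrow> real \<Rightarrow> real \<Rightarrow> 'm::finite pt set \<Rightarrow> ('m pt \<Rightarrow> real) \<Rightarrow> real set" where
  "morrey_vals lam p gam \<Omega> g =
     {((1 / min (r powr lam) 1) *
        (\<integral>y. \<bar>g y\<bar> powr p \<partial>(lebesgue_on (ball_g gam x r \<inter> \<Omega>)))) powr (1/p)
      | x r. x \<in> \<Omega> \<and> r > 0}"

definition in_morrey ::
  "real \<Rightarrow> real \<Rightarrow> real \<Rightarrow> 'm::finite pt set \<Rightarrow> ('m pt \<Rightarrow> real) \<Rightarrow> bool" where
  "in_morrey lam p gam \<Omega> g \<longleftrightarrow> Lp \<Omega> p g \<and> bdd_above (morrey_vals lam p gam \<Omega> g)"

definition morrey_norm ::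
  "real \<Rightarrow> real \<Rightarrow> real \<Rightarrow> 'm::finite pt set \<Rightarrow> ('m pt \<Rightarrow> real) \<Rightarrow> real" where
  "morrey_norm lam p gam \<Omega> g = Sup (morrey_vals lam p gam \<Omega> g)"

definition avg :: "'a::euclidean_space set \<Rightarrow> ('a \<Rightarrow> real) \<Rightarrow> real" where
  "avg E f = (1 / measure lebesgue E) * (\<integral>y. f y \<partial>(lebesgue_on E))"

end

(* The Poincare inequality turns the Morrey bound on the gradient into a Campanato
   estimate: since |Omega \<inter> B_gamma(x, tau r)| is at least of order r^n_gamma, the mean
   oscillation of f on Omega \<inter> B_gamma(x, r) is at most K r^alpha, where
   alpha = eta + (lambda - n_gamma)/p > 0 and K is proportional to the Morrey norms of the gradient.
   Campanato's argument then runs in the quasi-metric delta_gamma, whose balls have measure of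
   order r^n_gamma: averages over nested balls of comparable radii differ by O(K r^alpha), so the
   averages over dyadically shrinking balls converge at a geometric rate to a function h that is
   alpha-Hoelder for delta_gamma. Covering Omega by the balls of radius r around a maximal
   r-separated set, whose cardinality is O(r^-n_gamma), bounds the integral of |f - h| by
   O(r^alpha) for every small r, so h = f almost everywhere. *)

theory Submission
  imports Defs
begin

lemma powr_add_le_add_powr:
  fixes a b g :: real
  assumes "0 \<le> a" "0 \<le> b" "0 < g" "g \<le> 1"
  shows "(a + b) powr g \<le> a powr g + b powr g"
proof (cases "a + b = 0")
  case True
  then show ?thesis using assms by auto
next
  case False
  define s where "s = a + b"
  have s: "s > 0" using False assms by (simp add: s_def)
  have "a / s \<le> (a / s) powr g" "b / s \<le> (b / s) powr g"
    using powr_mono'[of g 1 "a / s"] powr_mono'[of g 1 "b / s"] assms s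
    by (auto simp: s_def divide_le_eq_1)
  moreover have "a / s + b / s = 1" using s by (simp add: s_def flip: add_divide_distrib)
  ultimately have "s powr g * 1 \<le> s powr g * ((a / s) powr g + (b / s) powr g)"
    by (intro mult_left_mono) auto
  also have "\<dots> = a powr g + b powr g"
    using s assms by (simp add: distrib_left powr_divide)
  finally show ?thesis by (simp add: s_def)
qed

lemma delta_g_nonneg: "0 \<le> delta_g gam x y"
  by (simp add: delta_g_def max.coboundedI2)

lemma delta_g_commute: "delta_g gam x y = delta_g gam y x"
  by (simp add: delta_g_def norm_minus_commute abs_minus_commute)

lemma delta_g_refl [simp]: "delta_g gam x x = 0"
  by (simp add: delta_g_def)

lemma delta_g_pos: "x \<noteq> y \<Longrightarrow> 0 < delta_g gam x y"
  by (cases x; cases y) (auto simp: delta_g_def less_max_iff_disj)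

lemma delta_g_le_sum: "delta_g gam x y \<le> norm (fst x - fst y) powr gam + \<bar>snd x - snd y\<bar>"
  by (simp add: delta_g_def)

lemma delta_g_triangle:
  assumes "0 < gam" "gam \<le> 1"
  shows "delta_g gam x z \<le> delta_g gam x y + delta_g gam y z"
proof -
  have "norm (fst x - fst z) powr gam \<le> (norm (fst x - fst y) + norm (fst y - fst z)) powr gam"
    using assms by (intro powr_mono2) (auto intro: norm_diff_triangle_le)
  also have "\<dots> \<le> norm (fst x - fst y) powr gam + norm (fst y - fst z) powr gam"
    using assms by (intro powr_add_le_add_powr) auto
  also have "\<dots> \<le> delta_g gam x y + delta_g gam y z"
    unfolding delta_g_def by (intro add_mono max.cobounded1)
  finally have "norm (fst x - fst z) powr gam \<le> delta_g gam x y + delta_g gam y z" .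
  moreover have "\<bar>snd x - snd z\<bar> \<le> delta_g gam x y + delta_g gam y z"
  proof -
    have "\<bar>snd x - snd z\<bar> \<le> \<bar>snd x - snd y\<bar> + \<bar>snd y - snd z\<bar>"
      by arith
    also have "\<dots> \<le> delta_g gam x y + delta_g gam y z"
      unfolding delta_g_def by (intro add_mono max.cobounded2)
    finally show ?thesis .
  qed
  ultimately show ?thesis
    by (simp add: delta_g_def[of gam x z])
qed

lemma bdd_above_delta_g:
  assumes "0 \<le> gam" "bounded S"
  shows "bdd_above {delta_g gam x y | x y. x \<in> S \<and> y \<in> S}"
proof -
  obtain M where M: "\<And>x. x \<in> S \<Longrightarrow> norm x \<le> M"
    using assms(2) by (auto simp: bounded_iff)
  have "delta_g gam x y \<le> max ((2 * M) powr gam) (2 * M)" if "x \<in> S" "y \<in> S" for x y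
  proof -
    have "norm (x - y) \<le> 2 * M"
      using M[OF that(1)] M[OF that(2)] norm_triangle_ineq4[of x y] by linarith
    moreover have "norm (fst x - fst y) \<le> norm (x - y)" "\<bar>snd x - snd y\<bar> \<le> norm (x - y)"
      by (metis fst_diff norm_fst_le prod.collapse, metis snd_diff norm_snd_le prod.collapse real_norm_def)
    moreover have "norm (fst x - fst y) powr gam \<le> (2 * M) powr gam"
      using calculation assms(1) by (intro powr_mono2) auto
    ultimately show ?thesis by (auto simp: delta_g_def le_max_iff_disj)
  qed
  then show ?thesis by (auto intro!: bdd_aboveI)
qed

lemma ball_g_eq_Times:
  assumes "0 < gam" "0 < r"
  shows "ball_g gam x r = ball (fst x) (r powr (1/gam)) \<times> {snd x - r <..< snd x + r}"
proof -
  have "a powr gam < r \<longleftrightarrow> a < r powr (1/gam)" if "0 \<le> a" for a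
    using assms that powr_less_mono2[of gam a "r powr (1/gam)"] powr_less_mono2[of "1/gam" "a powr gam" r]
    by (auto simp: powr_powr)
  then show ?thesis
    by (auto simp: ball_g_def delta_g_def dist_norm abs_diff_less_iff)
qed

lemma open_ball_g: "0 < gam \<Longrightarrow> open (ball_g gam x r)"
proof (cases "r > 0")
  case False
  then have "\<not> delta_g gam x y < r" for y
    using delta_g_nonneg[of gam x y] by linarith
  then have "ball_g gam x r = {}" by (simp add: ball_g_def)
  then show ?thesis by simp
qed (simp add: ball_g_eq_Times open_Times)

lemma measure_cube:
  fixes c :: "'a::euclidean_space"
  assumes "0 \<le> rho"
  shows "measure lborel (cbox (c - rho *\<^sub>R One) (c + rho *\<^sub>R One)) = (2 * rho) ^ DIM('a)"
  using assms by (simp add: measure_lborel_cbox_eq inner_diff_left inner_add_left algebra_simps)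

lemma ball_subset_cube: "ball c rho \<subseteq> cbox (c - rho *\<^sub>R One) (c + rho *\<^sub>R One)"
proof
  fix y assume "y \<in> ball c rho"
  then have "\<bar>(y - c) \<bullet> i\<bar> \<le> rho" if "i \<in> Basis" for i
    using Basis_le_norm[OF that, of "y - c"] by (simp add: dist_norm norm_minus_commute)
  then show "y \<in> cbox (c - rho *\<^sub>R One) (c + rho *\<^sub>R One)"
    by (auto simp: mem_box inner_diff_left inner_add_left abs_le_iff algebra_simps)
qed

lemma measure_ball_g_le:
  fixes x :: "'m::finite pt"
  assumes "0 < gam" "0 < r"
  shows "ball_g gam x r \<in> lmeasurable"
    and "measure lebesgue (ball_g gam x r) \<le> 2 ^ (CARD('m) + 1) * r powr n_gam gam TYPE('m)"
proof -
  define rho where "rho = r powr (1/gam)"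
  define box where "box = cbox (fst x - rho *\<^sub>R One, snd x - r) (fst x + rho *\<^sub>R One, snd x + r)"
  have sub: "ball_g gam x r \<subseteq> box"
    using ball_subset_cube[of "fst x" rho] assms
    by (auto simp: ball_g_eq_Times rho_def box_def cbox_Pair_eq)
  show "ball_g gam x r \<in> lmeasurable"
    using sub assms open_ball_g[of gam x r]
    by (intro bounded_set_imp_lmeasurable) (auto simp: box_def intro: bounded_subset[OF bounded_cbox] borel_open)
  have "measure lebesgue (ball_g gam x r) \<le> measure lebesgue box"
    using sub \<open>ball_g gam x r \<in> lmeasurable\<close> by (intro measure_mono_fmeasurable) (auto simp: box_def)
  also have "\<dots> = (2 * rho) ^ CARD('m) * (2 * r)"
    using assms measure_cube[of rho "fst x"]
    by (simp add: box_def content_Pair rho_def)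
  also have "\<dots> = 2 ^ (CARD('m) + 1) * r powr n_gam gam TYPE('m)"
    using assms
    by (simp add: rho_def n_gam_def powr_add power_mult_distrib powr_powr flip: powr_realpow)
  finally show "measure lebesgue (ball_g gam x r) \<le> 2 ^ (CARD('m) + 1) * r powr n_gam gam TYPE('m)" .
qed

lemma tendsto_delta_g:
  assumes "0 < gam"
  shows "((\<lambda>y. delta_g gam y x) \<longlongrightarrow> 0) (at x within S)"
proof -
  have "((\<lambda>y. norm (fst y - fst x)) \<longlongrightarrow> norm (fst x - fst x)) (at x within S)"
    by (intro tendsto_intros)
  then have "((\<lambda>y. norm (fst y - fst x)) \<longlongrightarrow> 0) (at x within S)"
    by simp
  then have "((\<lambda>y. norm (fst y - fst x) powr gam) \<longlongrightarrow> 0) (at x within S)"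
    by (rule tendsto_zero_powrI[OF _ tendsto_const]) (simp_all add: assms)
  moreover have "((\<lambda>y. \<bar>snd y - snd x\<bar>) \<longlongrightarrow> \<bar>snd x - snd x\<bar>) (at x within S)"
    by (intro tendsto_intros)
  ultimately have "((\<lambda>y. max (norm (fst y - fst x) powr gam) \<bar>snd y - snd x\<bar>) \<longlongrightarrow> max 0 0)
      (at x within S)"
    by (intro tendsto_max) simp_all
  then show ?thesis
    by (simp add: delta_g_def)
qed

lemma continuous_on_if_delta_g_hoelder:
  assumes "0 < gam" "0 < al"
    and hoelder: "\<And>x y. x \<in> S \<Longrightarrow> y \<in> S \<Longrightarrow> \<bar>h x - h y\<bar> \<le> C * delta_g gam x y powr al"
  shows "continuous_on S h"
  unfolding continuous_on_def
proof
  fix x assume x: "x \<in> S"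
  have "((\<lambda>y. delta_g gam y x powr al) \<longlongrightarrow> 0) (at x within S)"
    by (rule tendsto_zero_powrI[OF tendsto_delta_g[OF \<open>0 < gam\<close>] tendsto_const])
      (simp_all add: delta_g_nonneg \<open>0 < al\<close>)
  from tendsto_mult_left[OF this, of C]
  have bound: "((\<lambda>y. C * delta_g gam y x powr al) \<longlongrightarrow> 0) (at x within S)"
    by simp
  have "\<forall>\<^sub>F y in at x within S. y \<in> S"
    by (simp add: eventually_at_filter)
  then have "\<forall>\<^sub>F y in at x within S. norm (h y - h x) \<le> C * delta_g gam y x powr al"
    by (rule eventually_mono) (simp add: hoelder x)
  from Lim_null_comparison[OF this bound]
  show "(h \<longlongrightarrow> h x) (at x within S)"
    by (simp add: LIM_zero_iff)
qed

lemma integrable_lebesgue_on_subset: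
  fixes f :: "'a::euclidean_space \<Rightarrow> real"
  assumes "integrable (lebesgue_on T) f" "S \<subseteq> T" "S \<in> sets lebesgue" "T \<in> sets lebesgue"
  shows "integrable (lebesgue_on S) f"
proof -
  have "integrable lebesgue (\<lambda>x. if x \<in> T then f x else 0)"
    using assms(1,4) by (simp add: Lebesgue_Measure.integrable_restrict_UNIV)
  then have "integrable lebesgue (\<lambda>x. indicator S x *\<^sub>R (if x \<in> T then f x else 0))"
    by (rule integrable_mult_indicator[OF assms(3)])
  moreover have "(\<lambda>x. indicator S x *\<^sub>R (if x \<in> T then f x else 0)) = (\<lambda>x. if x \<in> S then f x else 0)"
    using assms(2) by (auto simp: indicator_def fun_eq_iff)
  ultimately have "integrable lebesgue (\<lambda>x. if x \<in> S then f x else 0)" by simp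
  then show ?thesis using assms(3) by (simp add: Lebesgue_Measure.integrable_restrict_UNIV)
qed

lemma Lp_imp_integrable:
  fixes f :: "'a::euclidean_space \<Rightarrow> real"
  assumes "S \<in> lmeasurable" "1 \<le> p" "Lp S p f"
  shows "integrable (lebesgue_on S) f"
proof (rule Bochner_Integration.integrable_bound)
  interpret finite_measure "lebesgue_on S"
    using assms(1) by (rule finite_measure_lebesgue_on)
  show "integrable (lebesgue_on S) (\<lambda>x. 1 + \<bar>f x\<bar> powr p)"
    using assms(3) by (auto simp: Lp_def)
  show "f \<in> borel_measurable (lebesgue_on S)"
    using assms(3) by (simp add: Lp_def)
  have "\<bar>t\<bar> \<le> 1 + \<bar>t\<bar> powr p" for t :: real
  proof (cases "\<bar>t\<bar> \<le> 1")
    case True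
    then show ?thesis using powr_ge_zero[of "\<bar>t\<bar>" p] by linarith
  next
    case False
    then have "\<bar>t\<bar> powr 1 \<le> \<bar>t\<bar> powr p"
      using assms(2) by (intro powr_mono) auto
    then show ?thesis using False by simp
  qed
  moreover have "norm (1 + \<bar>t\<bar> powr p) = 1 + \<bar>t\<bar> powr p" for t :: real
    by (simp add: add_nonneg_nonneg)
  ultimately show "AE x in lebesgue_on S. norm (f x) \<le> norm (1 + \<bar>f x\<bar> powr p)"
    by (intro AE_I2) simp
qed

lemma avg_diff_const:
  fixes f :: "'a::euclidean_space \<Rightarrow> real"
  assumes "E \<in> lmeasurable" "0 < measure lebesgue E" "integrable (lebesgue_on E) f"
  shows "avg E (\<lambda>y. f y - c) = avg E f - c"
proof -
  interpret finite_measure "lebesgue_on E"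
    using assms(1) by (rule finite_measure_lebesgue_on)
  have "measure (lebesgue_on E) (space (lebesgue_on E)) = measure lebesgue E"
    using assms(1) by (simp add: measure_restrict_space fmeasurableD)
  then show ?thesis
    using assms by (simp add: avg_def Bochner_Integration.integral_diff field_simps)
qed

lemma abs_avg_le: "\<bar>avg E f\<bar> \<le> avg E (\<lambda>y. \<bar>f y\<bar>)"
proof -
  have "\<bar>1 / measure lebesgue E\<bar> = 1 / measure lebesgue E" by simp
  then show ?thesis unfolding avg_def abs_mult
    by (metis integral_abs_bound mult_left_mono abs_ge_zero)
qed

lemma integral_eq_measure_avg:
  "0 < measure lebesgue E \<Longrightarrow> (\<integral>y. f y \<partial>lebesgue_on E) = measure lebesgue E * avg E f"
  by (simp add: avg_def)

lemma sqrt_sum_squares_powr_le: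
  fixes v :: "'i \<Rightarrow> real"
  assumes "finite I" "1 \<le> p"
  shows "sqrt (\<Sum>i\<in>I. (v i)\<^sup>2) powr p \<le> real (card I) powr (p/2) * (\<Sum>i\<in>I. \<bar>v i\<bar> powr p)"
proof -
  define T where "T = (\<Sum>i\<in>I. \<bar>v i\<bar> powr p)"
  have T: "T \<ge> 0" by (simp add: T_def sum_nonneg)
  have "\<bar>v i\<bar> \<le> T powr (1/p)" if "i \<in> I" for i
  proof -
    have "\<bar>v i\<bar> powr p \<le> T"
      unfolding T_def using assms(1) that by (intro member_le_sum) auto
    then have "(\<bar>v i\<bar> powr p) powr (1/p) \<le> T powr (1/p)"
      using assms(2) by (intro powr_mono2) auto
    then show ?thesis using assms(2) by (simp add: powr_powr)
  qed
  then have "(\<Sum>i\<in>I. (v i)\<^sup>2) \<le> (\<Sum>i\<in>I. (T powr (1/p))\<^sup>2)"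
    by (intro sum_mono) (metis abs_ge_zero power2_abs power_mono)
  then have "sqrt (\<Sum>i\<in>I. (v i)\<^sup>2) \<le> sqrt (real (card I) * (T powr (1/p))\<^sup>2)"
    by (simp add: real_sqrt_le_mono)
  also have "\<dots> = sqrt (real (card I)) * T powr (1/p)"
    by (simp add: real_sqrt_mult)
  finally have "sqrt (\<Sum>i\<in>I. (v i)\<^sup>2) \<le> sqrt (real (card I)) * T powr (1/p)" .
  then have "sqrt (\<Sum>i\<in>I. (v i)\<^sup>2) powr p \<le> (sqrt (real (card I)) * T powr (1/p)) powr p"
    using assms(2) by (intro powr_mono2) (auto intro: sum_nonneg)
  also have "\<dots> = real (card I) powr (p/2) * T"
    using assms(2) T by (simp add: powr_mult powr_powr powr_half_sqrt [symmetric])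
  finally show ?thesis by (simp add: T_def)
qed

lemma integral_le_sum_cover:
  fixes \<phi> :: "'a::euclidean_space \<Rightarrow> real"
  assumes P: "finite P" and S: "S \<in> sets lebesgue" and U: "\<And>p. p \<in> P \<Longrightarrow> U p \<in> sets lebesgue"
    and cover: "S \<subseteq> (\<Union>p\<in>P. U p)" and nonneg: "\<And>x. 0 \<le> \<phi> x"
    and int: "\<And>p. p \<in> P \<Longrightarrow> integrable (lebesgue_on (U p)) \<phi>"
  shows "(\<integral>x. \<phi> x \<partial>lebesgue_on S) \<le> (\<Sum>p\<in>P. \<integral>x. \<phi> x \<partial>lebesgue_on (U p))"
proof -
  let ?\<phi>U = "\<lambda>p x. if x \<in> U p then \<phi> x else 0"
  have intU: "integrable lebesgue (?\<phi>U p)" if "p \<in> P" for p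
    using int[OF that] U[OF that] by (simp add: Lebesgue_Measure.integrable_restrict_UNIV)
  have le: "(if x \<in> S then \<phi> x else 0) \<le> (\<Sum>p\<in>P. ?\<phi>U p x)" for x
  proof (cases "x \<in> S")
    case True
    then obtain p where "p \<in> P" "x \<in> U p" using cover by blast
    then have "\<phi> x \<le> (\<Sum>p\<in>P. ?\<phi>U p x)"
      using member_le_sum[of p P "\<lambda>p. ?\<phi>U p x"] P nonneg by simp
    with True show ?thesis by simp
  qed (simp add: nonneg sum_nonneg)
  have "(\<integral>x. \<phi> x \<partial>lebesgue_on S) = (\<integral>x. (if x \<in> S then \<phi> x else 0) \<partial>lebesgue)"
    by (rule Lebesgue_Measure.integral_restrict_UNIV[OF S, symmetric])
  also have "\<dots> \<le> (\<integral>x. (\<Sum>p\<in>P. ?\<phi>U p x) \<partial>lebesgue)"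
    using intU le nonneg
    by (intro integral_mono_AE' AE_I2 Bochner_Integration.integrable_sum sum_nonneg) auto
  also have "\<dots> = (\<Sum>p\<in>P. \<integral>x. ?\<phi>U p x \<partial>lebesgue)"
    using intU by (rule Bochner_Integration.integral_sum)
  also have "\<dots> = (\<Sum>p\<in>P. \<integral>x. \<phi> x \<partial>lebesgue_on (U p))"
    using U by (intro sum.cong refl Lebesgue_Measure.integral_restrict_UNIV)
  finally show ?thesis .
qed

section \<open>Domains with a lower bound on the measure of quasi-balls\<close>

text \<open>Only the lower bound on the measure of balls is assumed, and only at centres in \<open>Om\<close>:
  the matching upper bound holds for all sets, see \<open>vol_upper\<close>.\<close>

locale ahlfors_domain =
  fixes Om :: "'m::finite pt set" and gam c0 :: real
  assumes gam_pos: "0 < gam" and gam_le_1: "gam \<le> 1"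
    and open_Om: "open Om" and Om_nonempty: "Om \<noteq> {}" and bounded_Om: "bounded Om"
    and c0_pos: "0 < c0"
    and measure_lower: "\<And>x r. x \<in> Om \<Longrightarrow> 0 < r \<Longrightarrow> r \<le> diam_g gam Om \<Longrightarrow>
           c0 * r powr n_gam gam TYPE('m) \<le> measure lebesgue (Om \<inter> ball_g gam x r)"
begin

abbreviation "D \<equiv> diam_g gam Om"
definition "hdim = n_gam gam TYPE('m)"
abbreviation "B x r \<equiv> Om \<inter> ball_g gam x r"
abbreviation "vol x r \<equiv> measure lebesgue (B x r)"

definition "C_dbl = 2 ^ (CARD('m) + 1) * 2 powr hdim / c0"

lemma hdim_ge_1: "1 \<le> hdim"
  using gam_pos by (simp add: hdim_def n_gam_def)

lemma C_dbl_pos: "0 < C_dbl"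
  using c0_pos by (simp add: C_dbl_def)

lemma delta_le_diam: "x \<in> Om \<Longrightarrow> y \<in> Om \<Longrightarrow> delta_g gam x y \<le> D"
proof -
  assume "x \<in> Om" "y \<in> Om"
  then have "delta_g gam x y \<in> {delta_g gam x y | x y. x \<in> Om \<and> y \<in> Om}" by blast
  moreover have "bdd_above {delta_g gam x y | x y. x \<in> Om \<and> y \<in> Om}"
    using gam_pos bounded_Om by (intro bdd_above_delta_g) auto
  ultimately show ?thesis
    unfolding diam_g_def by (rule cSup_upper)
qed

lemma diam_pos: "0 < D"
proof -
  obtain x e where x: "x \<in> Om" and e: "0 < e" "ball x e \<subseteq> Om"
    using Om_nonempty open_Om open_contains_ball by blast
  define y where "y = x + (0, e/2)"
  have "dist x y < e"
    using e by (simp add: y_def dist_norm)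
  then have "y \<in> Om" using e(2) by auto
  moreover have "y \<noteq> x" using e by (simp add: y_def prod_eq_iff)
  ultimately have "0 < delta_g gam x y" "delta_g gam x y \<le> D"
    using delta_g_pos[of x y gam] delta_le_diam[OF x] by auto
  then show ?thesis by linarith
qed

lemma lmeasurable_Om: "Om \<in> lmeasurable"
  using bounded_Om open_Om by (intro bounded_set_imp_lmeasurable) (auto simp: borel_open)

lemma lmeasurable_B: "B x r \<in> lmeasurable"
proof (rule bounded_set_imp_lmeasurable)
  show "bounded (B x r)" using bounded_Om by (rule bounded_subset) auto
  have "open (B x r)" using open_Om open_ball_g[OF gam_pos] by blast
  then show "B x r \<in> sets lebesgue" by (intro sets_completionI_sets borel_open) simp
qed

lemma sets_Om: "Om \<in> sets lebesgue" and sets_B: "B x r \<in> sets lebesgue"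
  using lmeasurable_Om lmeasurable_B by (auto simp: fmeasurableD)

lemma B_mono: "r \<le> s \<Longrightarrow> B x r \<subseteq> B x s"
  by (auto simp: ball_g_def)

lemma vol_mono: "r \<le> s \<Longrightarrow> vol x r \<le> vol x s"
  by (rule measure_mono_fmeasurable[OF B_mono sets_B lmeasurable_B])

lemma vol_lower: "x \<in> Om \<Longrightarrow> 0 < s \<Longrightarrow> c0 * (min s D) powr hdim \<le> vol x s"
  using measure_lower[of x "min s D"] vol_mono[of "min s D" s x] diam_pos by (auto simp: hdim_def)

lemma vol_pos: "x \<in> Om \<Longrightarrow> 0 < s \<Longrightarrow> 0 < vol x s"
proof -
  assume "x \<in> Om" "0 < s"
  moreover have "0 < c0 * (min s D) powr hdim"
    using c0_pos diam_pos \<open>0 < s\<close> by simp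
  ultimately show ?thesis using vol_lower by (meson less_le_trans)
qed

lemma vol_upper: "0 < r \<Longrightarrow> vol x r \<le> 2 ^ (CARD('m) + 1) * r powr hdim"
proof -
  assume "0 < r"
  then have "vol x r \<le> measure lebesgue (ball_g gam x r)"
    by (rule measure_mono_fmeasurable[OF Int_lower2 sets_B measure_ball_g_le(1)[OF gam_pos]])
  with measure_ball_g_le(2)[OF gam_pos \<open>0 < r\<close>, of x] show ?thesis
    unfolding hdim_def by linarith
qed

lemma vol_le_doubling:
  assumes y: "y \<in> Om" and s: "0 < s" and r: "0 < r" "r \<le> 2 * s" "r \<le> 2 * D"
  shows "vol x r \<le> C_dbl * vol y s"
proof -
  have "r powr hdim \<le> (2 * min s D) powr hdim"
    using r hdim_ge_1 by (intro powr_mono2) auto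
  also have "\<dots> = 2 powr hdim * (min s D) powr hdim"
    using s diam_pos by (simp add: powr_mult)
  finally have "2 ^ (CARD('m) + 1) * r powr hdim \<le> 2 ^ (CARD('m) + 1) * (2 powr hdim * (min s D) powr hdim)"
    by (rule mult_left_mono) simp
  with vol_upper[OF r(1), of x]
  have "vol x r \<le> 2 ^ (CARD('m) + 1) * (2 powr hdim * (min s D) powr hdim)"
    by linarith
  also have "\<dots> = C_dbl * (c0 * (min s D) powr hdim)"
    using c0_pos by (simp add: C_dbl_def)
  also have "\<dots> \<le> C_dbl * vol y s"
    using vol_lower[OF y s] C_dbl_pos by (intro mult_left_mono) auto
  finally show ?thesis .
qed

definition separated :: "real \<Rightarrow> 'm pt set \<Rightarrow> bool" where
  "separated r P \<longleftrightarrow> P \<subseteq> Om \<and> (\<forall>p\<in>P. \<forall>q\<in>P. p \<noteq> q \<longrightarrow> r \<le> delta_g gam p q)"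

lemma separated_insert:
  assumes "separated r P" "y \<in> Om" "\<And>p. p \<in> P \<Longrightarrow> r \<le> delta_g gam p y"
  shows "separated r (insert y P)"
  using assms delta_g_commute[of gam y] unfolding separated_def by auto

lemma card_separated_le:
  assumes r: "0 < r" "r \<le> D" and P: "finite P" "separated r P"
  shows "real (card P) * (c0 * (r/2) powr hdim) \<le> measure lebesgue Om"
proof -
  have disj: "disjnt (B p (r/2)) (B q (r/2))" if "p \<in> P" "q \<in> P" "p \<noteq> q" for p q
    unfolding disjnt_iff
  proof (intro allI notI, elim conjE)
    fix z assume z: "z \<in> B p (r/2)" "z \<in> B q (r/2)"
    have "delta_g gam p q \<le> delta_g gam p z + delta_g gam z q"
      by (rule delta_g_triangle[OF gam_pos gam_le_1])
    also have "\<dots> < r"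
      using z delta_g_commute[of gam z q] by (simp add: ball_g_def)
    finally show False
      using P(2) that unfolding separated_def by force
  qed
  have "measure lebesgue (\<Union>p\<in>P. B p (r/2)) = (\<Sum>p\<in>P. vol p (r/2))"
    by (rule measure_UNION'[OF P(1) lmeasurable_B]) (simp add: pairwise_def disj)
  moreover have "measure lebesgue (\<Union>p\<in>P. B p (r/2)) \<le> measure lebesgue Om"
    by (rule measure_mono_fmeasurable[OF _ sets.finite_UN[OF P(1) sets_B] lmeasurable_Om]) blast
  moreover have "c0 * (r/2) powr hdim \<le> vol p (r/2)" if "p \<in> P" for p
  proof -
    have "p \<in> Om" using that P(2) unfolding separated_def by blast
    then show ?thesis using vol_lower[of p "r/2"] r by (simp add: min_def)
  qed
  then have "(\<Sum>p\<in>P. c0 * (r/2) powr hdim) \<le> (\<Sum>p\<in>P. vol p (r/2))"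
    by (rule sum_mono)
  ultimately show ?thesis by simp
qed

lemma ex_maximal_separated:
  assumes r: "0 < r" "r \<le> D"
  obtains P where "finite P" "separated r P"
    "\<And>P'. finite P' \<Longrightarrow> separated r P' \<Longrightarrow> card P' \<le> card P"
proof -
  define w where "w = c0 * (r/2) powr hdim"
  have w: "0 < w" using c0_pos r by (simp add: w_def)
  have bound: "\<forall>P. finite P \<and> separated r P \<longrightarrow> card P < nat \<lceil>measure lebesgue Om / w\<rceil> + 1"
  proof (intro allI impI, elim conjE)
    fix P assume "finite P" "separated r P"
    then have "real (card P) \<le> measure lebesgue Om / w"
      using card_separated_le[OF r] w by (simp add: w_def field_simps)
    also have "\<dots> \<le> real (nat \<lceil>measure lebesgue Om / w\<rceil>)"
      by (rule real_nat_ceiling_ge)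
    finally show "card P < nat \<lceil>measure lebesgue Om / w\<rceil> + 1"
      by linarith
  qed
  have "finite {} \<and> separated r {}" by (simp add: separated_def)
  from ex_has_greatest_nat[OF this bound] show ?thesis
    using that by blast
qed

lemma finite_cover_by_balls:
  assumes r: "0 < r" "r \<le> D"
  obtains P where "finite P" "P \<subseteq> Om" "Om \<subseteq> (\<Union>p\<in>P. B p r)"
    "real (card P) * (c0 * (r/2) powr hdim) \<le> measure lebesgue Om"
proof -
  obtain P where P: "finite P" "separated r P"
    and maximal: "\<And>P'. finite P' \<Longrightarrow> separated r P' \<Longrightarrow> card P' \<le> card P"
    using ex_maximal_separated[OF r] by blast
  have cover: "y \<in> (\<Union>p\<in>P. B p r)" if y: "y \<in> Om" for y
  proof (rule ccontr)
    assume "y \<notin> (\<Union>p\<in>P. B p r)"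
    then have far: "r \<le> delta_g gam p y" if "p \<in> P" for p
      using y that by (auto simp: ball_g_def not_less)
    then have "y \<notin> P" using r by (metis delta_g_refl not_le)
    moreover have "card (insert y P) \<le> card P"
      using P far y by (intro maximal separated_insert) auto
    ultimately show False using P(1) by simp
  qed
  have "P \<subseteq> Om" using P(2) unfolding separated_def by blast
  moreover have "Om \<subseteq> (\<Union>p\<in>P. B p r)"
    using cover by blast
  ultimately show ?thesis
    using that P(1) card_separated_le[OF r P] by blast
qed

definition C_hoelder :: "real \<Rightarrow> real" where
  "C_hoelder al = (2 * (C_dbl / (1 - (1/2) powr al)) + C_dbl) * 2 powr al"

lemma C_hoelder_pos: "0 < al \<Longrightarrow> 0 < C_hoelder al"
proof -
  assume "0 < al"
  then have "0 < 1 - (1/2::real) powr al" using powr01_less_one[of "1/2" al] by simp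
  then show ?thesis unfolding C_hoelder_def using C_dbl_pos by (intro mult_pos_pos add_pos_pos) auto
qed

end

section \<open>Campanato's theorem\<close>

locale campanato_fun = ahlfors_domain Om gam c0 for Om :: "'m::finite pt set" and gam c0 :: real +
  fixes f :: "'m pt \<Rightarrow> real" and K al :: real
  assumes integrable_f: "integrable (lebesgue_on Om) f"
    and K_nonneg: "0 \<le> K" and al_pos: "0 < al"
    and mean_osc: "\<And>x r. x \<in> Om \<Longrightarrow> 0 < r \<Longrightarrow> r \<le> 2 * D \<Longrightarrow>
           avg (B x r) (\<lambda>y. \<bar>f y - avg (B x r) f\<bar>) \<le> K * r powr al"
begin

abbreviation "fa x r \<equiv> avg (B x r) f"

lemma integrable_f_B: "integrable (lebesgue_on (B x r)) f"
  by (rule integrable_lebesgue_on_subset[OF integrable_f Int_lower1 sets_B sets_Om])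

lemma integrable_abs_diff_const_B: "integrable (lebesgue_on (B x r)) (\<lambda>y. \<bar>f y - c\<bar>)"
proof -
  interpret finite_measure "lebesgue_on (B x r)"
    using lmeasurable_B by (rule finite_measure_lebesgue_on)
  show ?thesis
    using integrable_f_B by (intro integrable_abs Bochner_Integration.integrable_diff) auto
qed

lemma avg_diff_le_nested:
  assumes x: "x \<in> Om" and y: "y \<in> Om" and s: "0 < s" and r: "0 < r" "r \<le> 2 * D"
    and sub: "B y s \<subseteq> B x r" and ratio: "vol x r \<le> C_dbl * vol y s"
  shows "\<bar>fa y s - fa x r\<bar> \<le> C_dbl * K * r powr al"
proof -
  have pos: "0 < vol y s" "0 < vol x r"
    using vol_pos x y s r by auto
  have "\<bar>fa y s - fa x r\<bar> = \<bar>avg (B y s) (\<lambda>z. f z - fa x r)\<bar>"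
    using pos lmeasurable_B integrable_f_B by (simp add: avg_diff_const)
  also have "\<dots> \<le> avg (B y s) (\<lambda>z. \<bar>f z - fa x r\<bar>)"
    by (rule abs_avg_le)
  also have "\<dots> = (\<integral>z. \<bar>f z - fa x r\<bar> \<partial>lebesgue_on (B y s)) / vol y s"
    by (simp add: avg_def)
  also have "\<dots> \<le> (\<integral>z. \<bar>f z - fa x r\<bar> \<partial>lebesgue_on (B x r)) / vol y s"
    using pos sub sets_B integrable_abs_diff_const_B
    by (intro divide_right_mono integral_mono_lebesgue_on_AE) auto
  also have "\<dots> = vol x r * avg (B x r) (\<lambda>z. \<bar>f z - fa x r\<bar>) / vol y s"
    using pos by (simp add: integral_eq_measure_avg)
  also have "\<dots> \<le> C_dbl * vol y s * (K * r powr al) / vol y s"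
    using pos ratio mean_osc[OF x r] K_nonneg
    by (intro divide_right_mono mult_mono) (auto simp: avg_def)
  also have "\<dots> = C_dbl * K * r powr al"
    using pos by simp
  finally show ?thesis .
qed

definition "q = (1/2::real) powr al"

lemma q_pos: "0 < q" and q_less_1: "q < 1"
  using al_pos by (auto simp: q_def powr01_less_one)

lemma half_powr: "0 \<le> r \<Longrightarrow> (r / 2) powr al = q * r powr al"
  by (simp add: q_def powr_mult[symmetric] mult.commute)

definition "C_lim = C_dbl / (1 - q)"

lemma C_lim_nonneg: "0 \<le> C_lim"
  using C_dbl_pos q_less_1 by (simp add: C_lim_def)

lemma C_hoelder_eq: "C_hoelder al = (2 * C_lim + C_dbl) * 2 powr al"
  by (simp add: C_hoelder_def C_lim_def q_def)

text \<open>Each halving of the radius costs \<open>C_dbl * K * r powr al\<close>; these costs form a geometric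
  series with ratio \<open>q\<close>, whose sum is \<open>C_lim * K * r powr al\<close>.\<close>

lemma avg_diff_le_dyadic:
  assumes x: "x \<in> Om" and s: "0 < s" "s \<le> r" "r \<le> 2 * D" "r * (1/2)^k \<le> s"
  shows "\<bar>fa x s - fa x r\<bar> \<le> C_lim * K * r powr al"
  using s
proof (induction k arbitrary: r)
  case 0
  then show ?case using C_lim_nonneg K_nonneg by simp
next
  case (Suc k)
  have step: "\<bar>fa x t - fa x r\<bar> \<le> C_dbl * K * r powr al" if "0 < t" "t \<le> r" "r \<le> 2 * t" for t
    using that Suc.prems
    by (intro avg_diff_le_nested[OF x x] B_mono vol_le_doubling[OF x]) auto
  have geom: "C_dbl + q * C_lim = C_lim"
    using q_less_1 by (simp add: C_lim_def field_simps)
  show ?case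
  proof (cases "r \<le> 2 * s")
    case True
    have "C_dbl \<le> C_lim"
      using geom mult_nonneg_nonneg[of q C_lim] q_pos C_lim_nonneg by linarith
    then have "C_dbl * K * r powr al \<le> C_lim * K * r powr al"
      using K_nonneg by (intro mult_right_mono) auto
    with step[OF Suc.prems(1,2) True] show ?thesis by linarith
  next
    case False
    then have "\<bar>fa x s - fa x (r/2)\<bar> \<le> C_lim * K * (r/2) powr al"
      using Suc.prems by (intro Suc.IH) (auto simp: field_simps)
    moreover have "\<bar>fa x (r/2) - fa x r\<bar> \<le> C_dbl * K * r powr al"
      using Suc.prems by (intro step) auto
    ultimately have "\<bar>fa x s - fa x r\<bar> \<le> (C_dbl + q * C_lim) * K * r powr al"
      using Suc.prems half_powr[of r] by (simp add: algebra_simps)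
    then show ?thesis by (simp only: geom)
  qed
qed

lemma avg_diff_le:
  assumes "x \<in> Om" "0 < s" "s \<le> r" "r \<le> 2 * D"
  shows "\<bar>fa x s - fa x r\<bar> \<le> C_lim * K * r powr al"
proof -
  obtain k where "(1/2::real)^k < s / r"
    using real_arch_pow_inv[of "s/r" "1/2"] assms by auto
  then have "r * (1/2)^k \<le> s"
    using assms by (simp add: field_simps)
  then show ?thesis by (rule avg_diff_le_dyadic[OF assms])
qed

definition rad :: "nat \<Rightarrow> real" where
  "rad k = 2 * D / 2 ^ k"

lemma rad_pos: "0 < rad k"
  using diam_pos by (simp add: rad_def)

lemma rad_le: "rad k \<le> 2 * D"
  using diam_pos by (simp add: rad_def divide_le_eq)

lemma rad_antimono: "k \<le> l \<Longrightarrow> rad l \<le> rad k"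
  using diam_pos by (simp add: rad_def frac_le)

lemma rad_tendsto_0: "rad \<longlonglongrightarrow> 0"
proof -
  have "(\<lambda>k. 2 * D * inverse (2 ^ k)) \<longlonglongrightarrow> 2 * D * 0"
    by (intro tendsto_mult tendsto_const LIMSEQ_inverse_realpow_zero) simp
  then show ?thesis by (simp add: rad_def[abs_def] divide_inverse)
qed

lemma bound_rad_tendsto_0: "(\<lambda>k. C * rad k powr al) \<longlonglongrightarrow> 0"
proof -
  have "(\<lambda>k. rad k powr al) \<longlonglongrightarrow> 0"
    by (rule tendsto_zero_powrI[OF rad_tendsto_0 tendsto_const])
      (simp_all add: al_pos less_imp_le[OF rad_pos])
  from tendsto_mult_left[OF this, of C] show ?thesis by simp
qed

lemma Cauchy_avg_rad: "x \<in> Om \<Longrightarrow> Cauchy (\<lambda>k. fa x (rad k))"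
proof (rule metric_CauchyI)
  fix e :: real assume x: "x \<in> Om" and e: "0 < e"
  obtain N where N: "\<And>k. N \<le> k \<Longrightarrow> C_lim * K * rad k powr al < e"
    using order_tendstoD(2)[OF bound_rad_tendsto_0 e] by (auto simp: eventually_sequentially)
  have close: "dist (fa x (rad k)) (fa x (rad l)) < e" if "N \<le> k" "k \<le> l" for k l
  proof -
    have "\<bar>fa x (rad l) - fa x (rad k)\<bar> \<le> C_lim * K * rad k powr al"
      by (rule avg_diff_le[OF x rad_pos rad_antimono[OF that(2)] rad_le])
    then show ?thesis
      using N[OF that(1)] by (simp add: dist_real_def abs_minus_commute)
  qed
  have "dist (fa x (rad k)) (fa x (rad l)) < e" if "N \<le> k" "N \<le> l" for k l
    using close[of k l] close[of l k] that by (cases "k \<le> l") (simp_all add: dist_commute)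
  then show "\<exists>N. \<forall>k\<ge>N. \<forall>l\<ge>N. dist (fa x (rad k)) (fa x (rad l)) < e"
    by blast
qed

definition f_lim :: "'m pt \<Rightarrow> real" where
  "f_lim x = lim (\<lambda>k. fa x (rad k))"

lemma f_lim_approx:
  assumes x: "x \<in> Om" and r: "0 < r" "r \<le> 2 * D"
  shows "\<bar>f_lim x - fa x r\<bar> \<le> C_lim * K * r powr al"
proof -
  have "(\<lambda>k. fa x (rad k)) \<longlonglongrightarrow> f_lim x"
    using Cauchy_avg_rad[OF x] unfolding f_lim_def
    by (simp add: Cauchy_convergent_iff convergent_LIMSEQ_iff)
  then have "(\<lambda>k. \<bar>fa x (rad k) - fa x r\<bar>) \<longlonglongrightarrow> \<bar>f_lim x - fa x r\<bar>"
    by (intro tendsto_intros)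
  moreover have "\<forall>\<^sub>F k in sequentially. rad k < r"
    by (rule order_tendstoD(2)[OF rad_tendsto_0 r(1)])
  then have "\<forall>\<^sub>F k in sequentially. \<bar>fa x (rad k) - fa x r\<bar> \<le> C_lim * K * r powr al"
    by eventually_elim (rule avg_diff_le[OF x rad_pos _ r(2)], simp)
  ultimately show ?thesis
    by (rule tendsto_upperbound) simp
qed

lemma f_lim_hoelder:
  assumes x: "x \<in> Om" and y: "y \<in> Om"
  shows "\<bar>f_lim x - f_lim y\<bar> \<le> C_hoelder al * K * delta_g gam x y powr al"
proof (cases "x = y")
  case True
  then show ?thesis using C_hoelder_pos[OF al_pos] K_nonneg by simp
next
  case False
  define \<rho> where "\<rho> = delta_g gam x y"
  have \<rho>: "0 < \<rho>" "\<rho> \<le> D"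
    using delta_g_pos[OF False] delta_le_diam[OF x y] by (auto simp: \<rho>_def)
  have "B y \<rho> \<subseteq> B x (2 * \<rho>)"
  proof
    fix z assume z: "z \<in> B y \<rho>"
    have "delta_g gam x z \<le> delta_g gam x y + delta_g gam y z"
      by (rule delta_g_triangle[OF gam_pos gam_le_1])
    with z show "z \<in> B x (2 * \<rho>)" by (simp add: ball_g_def \<rho>_def)
  qed
  then have "\<bar>fa y \<rho> - fa x (2 * \<rho>)\<bar> \<le> C_dbl * K * (2 * \<rho>) powr al"
    using \<rho> by (intro avg_diff_le_nested[OF x y] vol_le_doubling[OF y]) auto
  moreover have "\<bar>f_lim x - fa x (2 * \<rho>)\<bar> \<le> C_lim * K * (2 * \<rho>) powr al"
    using \<rho> by (intro f_lim_approx[OF x]) auto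
  moreover have "\<bar>f_lim y - fa y \<rho>\<bar> \<le> C_lim * K * \<rho> powr al"
    using \<rho> by (intro f_lim_approx[OF y]) auto
  moreover have "C_lim * K * \<rho> powr al \<le> C_lim * K * (2 * \<rho>) powr al"
    using \<rho> al_pos C_lim_nonneg K_nonneg by (intro mult_left_mono powr_mono2) auto
  ultimately have "\<bar>f_lim x - f_lim y\<bar> \<le> (2 * C_lim + C_dbl) * K * (2 * \<rho>) powr al"
    by (simp add: algebra_simps)
  also have "\<dots> = C_hoelder al * K * \<rho> powr al"
    using \<rho> by (simp add: C_hoelder_eq powr_mult)
  finally show ?thesis by (simp add: \<rho>_def)
qed

lemma continuous_on_f_lim: "continuous_on Om f_lim"
  by (rule continuous_on_if_delta_g_hoelder[OF gam_pos al_pos f_lim_hoelder])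

lemma integrable_abs_diff_f_lim: "integrable (lebesgue_on Om) (\<lambda>y. \<bar>f y - f_lim y\<bar>)"
proof -
  interpret finite_measure "lebesgue_on Om"
    using lmeasurable_Om by (rule finite_measure_lebesgue_on)
  obtain x0 where x0: "x0 \<in> Om" using Om_nonempty by blast
  have "\<bar>f_lim y\<bar> \<le> \<bar>f_lim x0\<bar> + C_hoelder al * K * D powr al" if y: "y \<in> Om" for y
  proof -
    have "C_hoelder al * K * delta_g gam y x0 powr al \<le> C_hoelder al * K * D powr al"
      using C_hoelder_pos[OF al_pos] K_nonneg al_pos delta_le_diam[OF y x0] delta_g_nonneg[of gam y x0]
      by (intro mult_left_mono powr_mono2) auto
    with f_lim_hoelder[OF y x0] show ?thesis by linarith
  qed
  then have "integrable (lebesgue_on Om) f_lim"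
    using continuous_imp_measurable_on_sets_lebesgue[OF continuous_on_f_lim sets_Om]
    by (intro integrable_const_bound[where B = "\<bar>f_lim x0\<bar> + C_hoelder al * K * D powr al"]) auto
  then show ?thesis
    using integrable_f by (intro integrable_abs Bochner_Integration.integrable_diff)
qed

definition "C_ball = 1 + C_lim + C_hoelder al"

lemma C_ball_nonneg: "0 \<le> C_ball"
  using C_lim_nonneg C_hoelder_pos[OF al_pos] by (simp add: C_ball_def)

lemma integral_abs_diff_f_lim_ball:
  assumes x: "x \<in> Om" and r: "0 < r" "r \<le> 2 * D"
  shows "(\<integral>y. \<bar>f y - f_lim y\<bar> \<partial>lebesgue_on (B x r)) \<le> C_ball * K * r powr al * vol x r"
proof -
  interpret finite_measure "lebesgue_on (B x r)"
    using lmeasurable_B by (rule finite_measure_lebesgue_on)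
  define L where "L = (C_lim + C_hoelder al) * K * r powr al"
  have pos: "0 < vol x r" by (rule vol_pos[OF x r(1)])
  have L: "0 \<le> L"
    using C_lim_nonneg C_hoelder_pos[OF al_pos] K_nonneg by (simp add: L_def)
  have pointwise: "\<bar>f y - f_lim y\<bar> \<le> \<bar>f y - fa x r\<bar> + L" if y: "y \<in> B x r" for y
  proof -
    have "y \<in> Om" "delta_g gam x y < r" using y by (auto simp: ball_g_def)
    then have "C_hoelder al * K * delta_g gam x y powr al \<le> C_hoelder al * K * r powr al"
      using C_hoelder_pos[OF al_pos] K_nonneg al_pos delta_g_nonneg[of gam x y]
      by (intro mult_left_mono powr_mono2) auto
    with f_lim_hoelder[OF x \<open>y \<in> Om\<close>] f_lim_approx[OF x r] show ?thesis
      by (simp add: L_def algebra_simps)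
  qed
  have "(\<integral>y. \<bar>f y - f_lim y\<bar> \<partial>lebesgue_on (B x r)) \<le> (\<integral>y. \<bar>f y - fa x r\<bar> + L \<partial>lebesgue_on (B x r))"
    using pointwise integrable_abs_diff_const_B L
    by (intro integral_mono_AE' AE_I2 Bochner_Integration.integrable_add) (auto simp: space_restrict_space)
  also have "\<dots> = vol x r * avg (B x r) (\<lambda>y. \<bar>f y - fa x r\<bar>) + vol x r * L"
    using integrable_abs_diff_const_B pos sets_B
    by (simp add: Bochner_Integration.integral_add integral_eq_measure_avg measure_restrict_space)
  also have "\<dots> \<le> vol x r * (K * r powr al) + vol x r * L"
    using mean_osc[OF x r] pos by simp
  also have "\<dots> = C_ball * K * r powr al * vol x r"
    by (simp add: L_def C_ball_def algebra_simps)
  finally show ?thesis .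
qed

text \<open>The number of balls in the cover, of order \<open>r powr - hdim\<close>, compensates their volume,
  of order \<open>r powr hdim\<close>.\<close>

lemma integral_abs_diff_f_lim_le:
  assumes r: "0 < r" "r \<le> D"
  shows "(\<integral>y. \<bar>f y - f_lim y\<bar> \<partial>lebesgue_on Om)
           \<le> C_dbl * measure lebesgue Om * C_ball * K * r powr al"
proof -
  obtain P where P: "finite P" "P \<subseteq> Om" "Om \<subseteq> (\<Union>p\<in>P. B p r)"
    and card: "real (card P) * (c0 * (r/2) powr hdim) \<le> measure lebesgue Om"
    using finite_cover_by_balls[OF r] by blast
  define M where "M = C_ball * K * r powr al * (2 ^ (CARD('m) + 1) * r powr hdim)"
  have M: "0 \<le> M" using C_ball_nonneg K_nonneg by (simp add: M_def)
  have ball: "(\<integral>y. \<bar>f y - f_lim y\<bar> \<partial>lebesgue_on (B p r)) \<le> M" if "p \<in> P" for p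
  proof -
    have "p \<in> Om" using that P(2) by blast
    then have "(\<integral>y. \<bar>f y - f_lim y\<bar> \<partial>lebesgue_on (B p r)) \<le> C_ball * K * r powr al * vol p r"
      using r diam_pos by (intro integral_abs_diff_f_lim_ball) auto
    also have "\<dots> \<le> M"
      unfolding M_def using C_ball_nonneg K_nonneg vol_upper[OF r(1)] by (intro mult_left_mono) auto
    finally show ?thesis .
  qed
  have "(\<integral>y. \<bar>f y - f_lim y\<bar> \<partial>lebesgue_on Om) \<le> (\<Sum>p\<in>P. \<integral>y. \<bar>f y - f_lim y\<bar> \<partial>lebesgue_on (B p r))"
    using P integrable_abs_diff_f_lim
    by (intro integral_le_sum_cover sets_Om sets_B integrable_lebesgue_on_subset[OF _ Int_lower1]) auto
  also have "\<dots> \<le> real (card P) * M"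
    using sum_mono[of P _ "\<lambda>_. M"] ball by simp
  also have "\<dots> \<le> (measure lebesgue Om / (c0 * (r/2) powr hdim)) * M"
    using card c0_pos r M by (intro mult_right_mono) (auto simp: field_simps)
  also have "\<dots> = C_dbl * measure lebesgue Om * C_ball * K * r powr al"
    using r c0_pos by (simp add: M_def C_dbl_def powr_divide field_simps)
  finally show ?thesis .
qed

lemma AE_f_lim_eq: "AE y in lebesgue_on Om. f_lim y = f y"
proof -
  define I where "I = (\<integral>y. \<bar>f y - f_lim y\<bar> \<partial>lebesgue_on Om)"
  define E where "E = C_dbl * measure lebesgue Om * C_ball * K"
  have "\<forall>\<^sub>F r in at_right (0::real). 0 \<le> r"
    using eventually_at_right_less[of "0::real"] by (rule eventually_mono) simp
  then have "((\<lambda>r. r powr al) \<longlongrightarrow> 0) (at_right 0)"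
    by (rule tendsto_zero_powrI[OF tendsto_ident_at tendsto_const _ al_pos])
  from tendsto_mult_left[OF this, of E]
  have "((\<lambda>r. E * r powr al) \<longlongrightarrow> E * 0) (at_right 0)" by simp
  moreover have "\<forall>\<^sub>F r in at_right 0. I \<le> E * r powr al"
    unfolding eventually_at_right[OF diam_pos]
    using integral_abs_diff_f_lim_le by (auto simp: I_def E_def mult.assoc intro!: exI[of _ D] diam_pos)
  ultimately have "I \<le> 0"
    by (intro tendsto_le[OF trivial_limit_at_right_real _ tendsto_const]) simp_all
  moreover have "0 \<le> I" by (simp add: I_def)
  ultimately have "I = 0" by simp
  then have "AE y in lebesgue_on Om. \<bar>f y - f_lim y\<bar> = 0"
    using integral_nonneg_eq_0_iff_AE[OF integrable_abs_diff_f_lim] by (simp add: I_def)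
  then show ?thesis by eventually_elim simp
qed

end

lemma (in ahlfors_domain) campanato_hoelder:
  assumes "integrable (lebesgue_on Om) f" "0 \<le> K" "0 < al"
    and "\<And>x r. x \<in> Om \<Longrightarrow> 0 < r \<Longrightarrow> r \<le> 2 * D \<Longrightarrow>
           avg (B x r) (\<lambda>y. \<bar>f y - avg (B x r) f\<bar>) \<le> K * r powr al"
  shows "\<exists>h. continuous_on Om h \<and> (AE y in lebesgue_on Om. h y = f y) \<and>
           (\<forall>x\<in>Om. \<forall>y\<in>Om. \<bar>h x - h y\<bar> \<le> C_hoelder al * K * delta_g gam x y powr al)"
proof -
  interpret campanato_fun Om gam c0 f K al
    using assms by unfold_locales
  show ?thesis
    using continuous_on_f_lim AE_f_lim_eq f_lim_hoelder by blast
qed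

section \<open>Morrey bounds on the gradient\<close>

context ahlfors_domain
begin

lemma morrey_vals_mem:
  assumes "x \<in> Om" "0 < s"
  shows "((1 / min (s powr lam) 1) * (\<integral>y. \<bar>g y\<bar> powr p \<partial>lebesgue_on (B x s))) powr (1/p)
           \<in> morrey_vals lam p gam Om g"
  unfolding morrey_vals_def mem_Collect_eq using assms
  by (intro exI[of _ x] exI[of _ s]) (simp add: Int_commute)

lemma morrey_norm_nonneg:
  assumes "in_morrey lam p gam Om g"
  shows "0 \<le> morrey_norm lam p gam Om g"
proof -
  obtain x where x: "x \<in> Om" using Om_nonempty by blast
  have "0 \<le> ((1 / min (1 powr lam) 1) * (\<integral>y. \<bar>g y\<bar> powr p \<partial>lebesgue_on (B x 1))) powr (1/p)"
    by simp
  also have "\<dots> \<le> morrey_norm lam p gam Om g"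
    unfolding morrey_norm_def using assms morrey_vals_mem[OF x, of 1]
    by (intro cSup_upper) (auto simp: in_morrey_def)
  finally show ?thesis .
qed

lemma integral_powr_le_morrey_norm:
  assumes g: "in_morrey lam p gam Om g" and p: "0 < p" and x: "x \<in> Om" and s: "0 < s"
  shows "(\<integral>y. \<bar>g y\<bar> powr p \<partial>lebesgue_on (B x s)) \<le> min (s powr lam) 1 * morrey_norm lam p gam Om g powr p"
proof -
  define I where "I = (\<integral>y. \<bar>g y\<bar> powr p \<partial>lebesgue_on (B x s))"
  define \<mu> where "\<mu> = min (s powr lam) 1"
  have I: "0 \<le> I" and \<mu>: "0 < \<mu>" using s by (simp_all add: I_def \<mu>_def)
  have "((1 / \<mu>) * I) powr (1/p) \<le> morrey_norm lam p gam Om g"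
    unfolding morrey_norm_def I_def \<mu>_def using g morrey_vals_mem[OF x s]
    by (intro cSup_upper) (auto simp: in_morrey_def)
  then have "(((1 / \<mu>) * I) powr (1/p)) powr p \<le> morrey_norm lam p gam Om g powr p"
    using p by (intro powr_mono2) auto
  then have "(1 / \<mu>) * I \<le> morrey_norm lam p gam Om g powr p"
    using p I \<mu> by (simp add: powr_powr)
  then show ?thesis using \<mu> by (simp add: I_def \<mu>_def field_simps)
qed

lemma avg_gradient_powr_le:
  fixes g :: "'m pt \<Rightarrow> 'm pt \<Rightarrow> real"
  assumes p: "1 \<le> p" and g: "\<forall>i\<in>Basis. in_morrey lam p gam Om (g i)"
    and x: "x \<in> Om" and s: "0 < s"
  defines "d \<equiv> real DIM('m pt)" and "G \<equiv> (\<Sum>i\<in>Basis. morrey_norm lam p gam Om (g i))"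
  shows "avg (B x s) (\<lambda>y. sqrt (\<Sum>i\<in>Basis. (g i y)\<^sup>2) powr p)
           \<le> d powr (p/2) * d * G powr p * (min (s powr lam) 1 / vol x s)"
proof -
  define \<mu> where "\<mu> = min (s powr lam) 1"
  have pos: "0 < vol x s" by (rule vol_pos[OF x s])
  have int: "integrable (lebesgue_on (B x s)) (\<lambda>y. \<bar>g i y\<bar> powr p)" if "i \<in> Basis" for i
    using g that
    by (intro integrable_lebesgue_on_subset[OF _ Int_lower1 sets_B sets_Om]) (auto simp: in_morrey_def Lp_def)
  have norm_le: "morrey_norm lam p gam Om (g i) powr p \<le> G powr p" if "i \<in> Basis" for i
    unfolding G_def using g that p morrey_norm_nonneg
    by (intro powr_mono2 member_le_sum) (auto intro: sum_nonneg)
  have "(\<integral>y. sqrt (\<Sum>i\<in>Basis. (g i y)\<^sup>2) powr p \<partial>lebesgue_on (B x s))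
      \<le> (\<integral>y. d powr (p/2) * (\<Sum>i\<in>Basis. \<bar>g i y\<bar> powr p) \<partial>lebesgue_on (B x s))"
    using int unfolding d_def
    by (intro integral_mono_AE' AE_I2 integrable_mult_right Bochner_Integration.integrable_sum
        sqrt_sum_squares_powr_le[OF finite_Basis p] mult_nonneg_nonneg sum_nonneg) auto
  also have "\<dots> = d powr (p/2) * (\<Sum>i\<in>Basis. \<integral>y. \<bar>g i y\<bar> powr p \<partial>lebesgue_on (B x s))"
    using int by (simp add: Bochner_Integration.integral_sum)
  also have "\<dots> \<le> d powr (p/2) * (\<Sum>i\<in>(Basis :: 'm pt set). \<mu> * G powr p)"
  proof (intro mult_left_mono sum_mono)
    fix i :: "'m pt" assume i: "i \<in> Basis"
    have "(\<integral>y. \<bar>g i y\<bar> powr p \<partial>lebesgue_on (B x s)) \<le> \<mu> * morrey_norm lam p gam Om (g i) powr p"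
      unfolding \<mu>_def using g i p by (intro integral_powr_le_morrey_norm[OF _ _ x s]) auto
    also have "\<dots> \<le> \<mu> * G powr p"
      using norm_le[OF i] s by (intro mult_left_mono) (auto simp: \<mu>_def)
    finally show "(\<integral>y. \<bar>g i y\<bar> powr p \<partial>lebesgue_on (B x s)) \<le> \<mu> * G powr p" .
  qed simp
  also have "\<dots> = d powr (p/2) * d * G powr p * \<mu>"
    by (simp add: d_def)
  finally show ?thesis
    using pos by (simp add: avg_def \<mu>_def divide_right_mono field_simps)
qed

lemma min_powr_div_vol_le:
  assumes x: "x \<in> Om" and r: "0 < r" "r \<le> 2 * D" and tau: "1 \<le> tau"
  shows "min ((tau * r) powr lam) 1 / vol x (tau * r)
           \<le> (tau powr (lam - hdim) + tau powr lam * 2 powr hdim) / c0 * r powr (lam - hdim)"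
proof -
  define s where "s = tau * r"
  have s: "0 < s" using r tau by (simp add: s_def)
  have low: "0 < c0 * (min s D) powr hdim" using c0_pos s diam_pos by simp
  have "min (s powr lam) 1 / vol x s \<le> s powr lam / (c0 * (min s D) powr hdim)"
    using vol_pos[OF x s] vol_lower[OF x s] low by (intro frac_le) auto
  also have "\<dots> \<le> (tau powr (lam - hdim) + tau powr lam * 2 powr hdim) / c0 * r powr (lam - hdim)"
  proof (cases "s \<le> D")
    case True
    then have "s powr lam / (c0 * (min s D) powr hdim) = tau powr (lam - hdim) / c0 * r powr (lam - hdim)"
      using s r tau by (simp add: s_def powr_diff powr_mult)
    then show ?thesis using c0_pos by (simp add: divide_right_mono mult_right_mono)
  next
    case False
    have "(r / 2) powr hdim \<le> D powr hdim" using r hdim_ge_1 by (intro powr_mono2) auto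
    then have "s powr lam / (c0 * (min s D) powr hdim) \<le> s powr lam / (c0 * (r / 2) powr hdim)"
      using False r c0_pos by (intro divide_left_mono mult_left_mono) auto
    also have "\<dots> = tau powr lam * 2 powr hdim / c0 * r powr (lam - hdim)"
      using r tau by (simp add: s_def powr_mult powr_divide powr_diff)
    also have "\<dots> \<le> (tau powr (lam - hdim) + tau powr lam * 2 powr hdim) / c0 * r powr (lam - hdim)"
      using c0_pos by (intro mult_right_mono divide_right_mono) auto
    finally show ?thesis .
  qed
  finally show ?thesis by (simp add: s_def)
qed

definition C_poincare :: "real \<Rightarrow> real \<Rightarrow> real \<Rightarrow> real \<Rightarrow> real" where
  "C_poincare p tau cp lam = cp * (real DIM('m pt) powr (p/2) * real DIM('m pt)
     * ((tau powr (lam - hdim) + tau powr lam * 2 powr hdim) / c0)) powr (1/p)"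

lemma C_poincare_nonneg: "0 \<le> cp \<Longrightarrow> 0 \<le> C_poincare p tau cp lam"
  by (simp add: C_poincare_def)

lemma C_poincare_pos: "0 < cp \<Longrightarrow> 1 \<le> tau \<Longrightarrow> 0 < C_poincare p tau cp lam"
proof -
  assume "0 < cp" "1 \<le> tau"
  then have "0 < real DIM('m pt) powr (p/2) * real DIM('m pt)
      * ((tau powr (lam - hdim) + tau powr lam * 2 powr hdim) / c0)"
    using c0_pos by (intro mult_pos_pos divide_pos_pos add_pos_pos) auto
  then show ?thesis
    unfolding C_poincare_def using \<open>0 < cp\<close> by (metis mult_pos_pos powr_gt_zero order_less_irrefl)
qed

lemma mean_osc_le_morrey_gradient:
  fixes g :: "'m pt \<Rightarrow> 'm pt \<Rightarrow> real"
  assumes p: "1 \<le> p" and tau: "1 \<le> tau" and cp: "0 \<le> cp"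
    and g: "\<forall>i\<in>Basis. in_morrey lam p gam Om (g i)"
    and poincare: "\<And>x r. x \<in> Om \<Longrightarrow> 0 < r \<Longrightarrow>
          avg (B x r) (\<lambda>y. \<bar>f y - avg (B x r) f\<bar>)
            \<le> cp * r powr eta * avg (B x (tau * r)) (\<lambda>y. sqrt (\<Sum>i\<in>Basis. (g i y)\<^sup>2) powr p) powr (1/p)"
    and x: "x \<in> Om" and r: "0 < r" "r \<le> 2 * D"
  shows "avg (B x r) (\<lambda>y. \<bar>f y - avg (B x r) f\<bar>)
           \<le> C_poincare p tau cp lam * (\<Sum>i\<in>Basis. morrey_norm lam p gam Om (g i))
               * r powr (eta + (lam - hdim) / p)"
proof -
  define d where "d = real DIM('m pt)"
  define G where "G = (\<Sum>i\<in>Basis. morrey_norm lam p gam Om (g i))"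
  define Kb where "Kb = (tau powr (lam - hdim) + tau powr lam * 2 powr hdim) / c0"
  define A where "A = avg (B x (tau * r)) (\<lambda>y. sqrt (\<Sum>i\<in>Basis. (g i y)\<^sup>2) powr p)"
  have G: "0 \<le> G" unfolding G_def using g morrey_norm_nonneg by (intro sum_nonneg) blast
  have A: "0 \<le> A" by (simp add: A_def avg_def)
  have tr: "0 < tau * r" using r tau by simp
  have "A \<le> d powr (p/2) * d * G powr p * (min ((tau * r) powr lam) 1 / vol x (tau * r))"
    unfolding A_def d_def G_def by (rule avg_gradient_powr_le[OF p g x tr])
  also have "\<dots> \<le> d powr (p/2) * d * G powr p * (Kb * r powr (lam - hdim))"
    unfolding Kb_def using min_powr_div_vol_le[OF x r tau] by (intro mult_left_mono) (auto simp: d_def)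
  finally have "A powr (1/p) \<le> ((d powr (p/2) * d * Kb) * G powr p * r powr (lam - hdim)) powr (1/p)"
    using A p by (intro powr_mono2) (auto simp: algebra_simps)
  also have "\<dots> = (d powr (p/2) * d * Kb) powr (1/p) * G * r powr ((lam - hdim) / p)"
    using G p by (simp add: powr_mult powr_powr)
  finally have "cp * r powr eta * A powr (1/p)
      \<le> cp * r powr eta * ((d powr (p/2) * d * Kb) powr (1/p) * G * r powr ((lam - hdim) / p))"
    using cp by (intro mult_left_mono) auto
  also have "\<dots> = C_poincare p tau cp lam * G * r powr (eta + (lam - hdim) / p)"
    by (simp add: C_poincare_def d_def Kb_def powr_add)
  finally show ?thesis
    using poincare[OF x r(1)] by (simp add: A_def G_def)
qed

lemma morrey_sobolev_hoelder:
  fixes g :: "'m pt \<Rightarrow> 'm pt \<Rightarrow> real" and p tau cp eta lam :: real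
  defines "al \<equiv> eta + (lam - hdim) / p"
  assumes p: "1 \<le> p" and tau: "1 \<le> tau" and cp: "0 \<le> cp" and al: "0 < al"
    and f: "Lp Om p f" and g: "\<forall>i\<in>Basis. in_morrey lam p gam Om (g i)"
    and poincare: "\<And>x r. x \<in> Om \<Longrightarrow> 0 < r \<Longrightarrow>
          avg (B x r) (\<lambda>y. \<bar>f y - avg (B x r) f\<bar>)
            \<le> cp * r powr eta * avg (B x (tau * r)) (\<lambda>y. sqrt (\<Sum>i\<in>Basis. (g i y)\<^sup>2) powr p) powr (1/p)"
  shows "\<exists>h. continuous_on Om h \<and> (AE y in lebesgue_on Om. h y = f y) \<and>
           (\<forall>x\<in>Om. \<forall>y\<in>Om. \<bar>h x - h y\<bar> \<le>
              C_hoelder al * C_poincare p tau cp lam * (\<Sum>i\<in>Basis. morrey_norm lam p gam Om (g i)) *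
              (norm (fst x - fst y) powr gam + \<bar>snd x - snd y\<bar>) powr al)"
proof -
  define K where "K = C_poincare p tau cp lam * (\<Sum>i\<in>Basis. morrey_norm lam p gam Om (g i))"
  have K: "0 \<le> K"
    unfolding K_def using g morrey_norm_nonneg C_poincare_nonneg[OF cp]
    by (intro mult_nonneg_nonneg sum_nonneg) auto
  have "avg (B x r) (\<lambda>y. \<bar>f y - avg (B x r) f\<bar>) \<le> K * r powr al"
    if "x \<in> Om" "0 < r" "r \<le> 2 * D" for x r
    unfolding K_def al_def by (rule mean_osc_le_morrey_gradient[OF p tau cp g poincare that])
  then obtain h where h: "continuous_on Om h" "AE y in lebesgue_on Om. h y = f y"
    and hoelder: "\<forall>x\<in>Om. \<forall>y\<in>Om. \<bar>h x - h y\<bar> \<le> C_hoelder al * K * delta_g gam x y powr al"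
    using campanato_hoelder[OF Lp_imp_integrable[OF lmeasurable_Om p f] K al] by blast
  show ?thesis
  proof (intro exI[of _ h] conjI h ballI)
    fix x y assume "x \<in> Om" "y \<in> Om"
    with hoelder have "\<bar>h x - h y\<bar> \<le> C_hoelder al * K * delta_g gam x y powr al" by blast
    also have "\<dots> \<le> C_hoelder al * K * (norm (fst x - fst y) powr gam + \<bar>snd x - snd y\<bar>) powr al"
      using C_hoelder_pos[OF al] K al delta_g_le_sum[of gam x y] delta_g_nonneg[of gam x y]
      by (intro mult_left_mono powr_mono2) auto
    finally show "\<bar>h x - h y\<bar> \<le> C_hoelder al * C_poincare p tau cp lam *
        (\<Sum>i\<in>Basis. morrey_norm lam p gam Om (g i)) *
        (norm (fst x - fst y) powr gam + \<bar>snd x - snd y\<bar>) powr al"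
      by (simp add: K_def mult.assoc)
  qed
qed

end

theorem theorem2p7:
  fixes \<Omega> :: "'m::finite pt set"
    and gam p c0 tau eta cp lam :: real
  assumes gam: "0 < gam" "gam \<le> 1"
    and p: "1 \<le> p"
    and dom: "open \<Omega>" "connected \<Omega>" "\<Omega> \<noteq> {}" "bounded \<Omega>"
    and c0: "c0 > 0"
    and ahlfors: "\<forall>x\<in>closure \<Omega>. \<forall>r. 0 < r \<and> r \<le> diam_g gam \<Omega> \<longrightarrow>
                   measure lebesgue (ball_g gam x r \<inter> \<Omega>) \<ge> c0 * r powr n_gam gam TYPE('m)"
    and tau: "tau \<ge> 1" and eta: "eta > 0" and cp: "cp > 0"
    and poincare: "\<forall>f g. Lp \<Omega> p f \<and> (\<forall>i\<in>Basis. weak_partial \<Omega> f i (g i) \<and> Lp \<Omega> p (g i)) \<longrightarrow>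
        (\<forall>x\<in>\<Omega>. \<forall>r>0.
           avg (\<Omega> \<inter> ball_g gam x r) (\<lambda>y. \<bar>f y - avg (\<Omega> \<inter> ball_g gam x r) f\<bar>)
           \<le> cp * r powr eta *
              (avg (\<Omega> \<inter> ball_g gam x (tau * r))
                 (\<lambda>y. (sqrt (\<Sum>i\<in>Basis. (g i y)\<^sup>2)) powr p)) powr (1 / p))"
    and lam: "lam > 0" "p * eta > n_gam gam TYPE('m) - lam"
  shows "\<exists>c>0. \<forall>f g. in_morrey lam p gam \<Omega> f \<and>
            (\<forall>i\<in>Basis. weak_partial \<Omega> f i (g i) \<and> in_morrey lam p gam \<Omega> (g i)) \<longrightarrow>
          (\<exists>h. continuous_on \<Omega> h \<and> (AE y in lebesgue_on \<Omega>. h y = f y) \<and>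
            (\<forall>x\<in>\<Omega>. \<forall>y\<in>\<Omega>. \<bar>h x - h y\<bar> \<le>
               c * (morrey_norm lam p gam \<Omega> f + (\<Sum>i\<in>Basis. morrey_norm lam p gam \<Omega> (g i))) *
               (norm (fst x - fst y) powr gam + \<bar>snd x - snd y\<bar>)
                 powr (eta + (lam - n_gam gam TYPE('m)) / p)))"
proof -
  interpret ahlfors_domain \<Omega> gam c0
    using gam dom c0 ahlfors closure_subset by unfold_locales (auto simp: Int_commute)
  define al where "al = eta + (lam - hdim) / p"
  have al: "0 < al"
    using lam(2) p by (simp add: al_def hdim_def field_simps)
  define c where "c = C_hoelder al * C_poincare p tau cp lam"
  have c: "0 < c"
    using C_hoelder_pos[OF al] C_poincare_pos[OF cp] tau by (simp add: c_def)
  show ?thesis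
  proof (intro exI[of _ c] conjI c allI impI)
    fix f g
    assume fg: "in_morrey lam p gam \<Omega> f \<and>
      (\<forall>i\<in>Basis. weak_partial \<Omega> f i (g i) \<and> in_morrey lam p gam \<Omega> (g i))"
    then have sobolev: "Lp \<Omega> p f \<and> (\<forall>i\<in>Basis. weak_partial \<Omega> f i (g i) \<and> Lp \<Omega> p (g i))"
      and g: "\<forall>i\<in>Basis. in_morrey lam p gam \<Omega> (g i)"
      by (simp_all add: in_morrey_def)
    from morrey_sobolev_hoelder[OF p tau less_imp_le[OF cp] al[unfolded al_def] conjunct1[OF sobolev] g
        poincare[rule_format, OF sobolev]]
    obtain h where h: "continuous_on \<Omega> h" "AE y in lebesgue_on \<Omega>. h y = f y"
      and hoelder: "\<forall>x\<in>\<Omega>. \<forall>y\<in>\<Omega>. \<bar>h x - h y\<bar> \<le> c * (\<Sum>i\<in>Basis. morrey_norm lam p gam \<Omega> (g i)) *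
          (norm (fst x - fst y) powr gam + \<bar>snd x - snd y\<bar>) powr al"
      unfolding al_def c_def by blast
    have "c * (\<Sum>i\<in>Basis. morrey_norm lam p gam \<Omega> (g i)) * t
        \<le> c * (morrey_norm lam p gam \<Omega> f + (\<Sum>i\<in>Basis. morrey_norm lam p gam \<Omega> (g i))) * t"
      if "0 \<le> t" for t
      using that c fg morrey_norm_nonneg by (intro mult_right_mono mult_left_mono) auto
    with h hoelder show "\<exists>h. continuous_on \<Omega> h \<and> (AE y in lebesgue_on \<Omega>. h y = f y) \<and>
            (\<forall>x\<in>\<Omega>. \<forall>y\<in>\<Omega>. \<bar>h x - h y\<bar> \<le>
               c * (morrey_norm lam p gam \<Omega> f + (\<Sum>i\<in>Basis. morrey_norm lam p gam \<Omega> (g i))) *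
               (norm (fst x - fst y) powr gam + \<bar>snd x - snd y\<bar>)
                 powr (eta + (lam - n_gam gam TYPE('m)) / p))"
      unfolding al_def hdim_def by (meson order.trans powr_ge_zero)
  qed
qed

end
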